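(* Let $f:\mathbb{R}^n\to\mathbb{R}\cup\{+\infty\}$ be closed and convex, let $X\in\mathbb{R}^{n\times m}$ have rank $r$ with compact SVD $X=U_r\Sigma_r V_r^\top$, let $\gamma>0$, $k\ge0$. For an integer $q\ge0$ define $$p^*_{\rm con}(q)=\min_{w\in\mathbb{R}^m}\ f(Xw)\quad\text{s.t.}\quad \|w\|_0\le q,\ \|w\|_2^2\le\gamma,$$ $$p^{**}_{\rm con}(k)=\min_{v\in\mathbb{R}^m,\ u\in[0,1]^m}\ f(XD(u)v)\quad\text{s.t.}\quad \mathbf 1^\top u\le k,\ v^\top D(u)v\le\gamma .$$ Let $(v^*,u^* )$ be an optimal solution of the latter with optimal value $t^*$, let $z^*=\Sigma_rV_r^\top D(u^* )v^*$, let $\ell_i$ be the $i$-th column of $\Sigma_rV_r^\top$, let $c\sim\mathcal N(0,I_m)$, and consider the linear program in $u\in\mathbb{R}^m$: $$\min\ c^\top u\quad\text{s.t.}\quad \sum_{i=1}^m u_i\le k,\quad \sum_{i=1}^m u_i(v_i^* )^2\le\gamma,\quad \sum_{i=1}^m u_i\ell_iv_i^*=z^*,\quad u\in[0,1]^m.$$ Then, with probability one, from an optimal basic feasible solution $\bar u$ of this linear program one can construct the point $w=D(\bar u)v^*$ (with $S=\{i:\bar u_i\notin\{0,1\}\}$, $\tilde u_i=1,\tilde v_i=\bar u_iv_i^*$ for $i\in S$, $\tilde u_i=\bar u_i,\tilde v_i=v_i^*$ otherwise, $w=D(\tilde u)\tilde v$), whose objective value $\mathrm{OPT}=f(Xw)$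 satisfies $$p^*_{\rm con}(k+r+2)-\rho(f)\le\mathrm{OPT}\le p^{**}_{\rm con}(k)\le p^*_{\rm con}(k),$$ where $\rho(f)=\sup_{w}\big(f(Xw)-f^{**}(Xw)\big)\ge0$.
   Context: $\|w\|_0$ is the number of nonzero entries of $w$; $D(u)=\mathrm{diag}(u_1,\dots,u_m)$; $\mathbf 1$ is the all-ones vector. $f^*(y)=\sup_x x^\top y-f(x)$ is the convex conjugate and $f^{**}$ the biconjugate (convex envelope) of $f$; for closed convex $f$, $f^{**}=f$. *)

theory Defs
  imports "HOL-Analysis.Analysis" "HOL-Probability.Probability"
begin

text \<open>Extended-valued functions R^n -> R \<union> {+\<infinity>} are modelled as ereal-valued
functions never taking the value -\<infinity>.\<close>

definition closed_convex_fun :: "(real^'n \<Rightarrow> ereal) \<Rightarrow> bool" where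
  "closed_convex_fun f \<longleftrightarrow> (\<forall>x. f x \<noteq> -\<infinity>) \<and>
     convex {(x, t::real). f x \<le> ereal t} \<and> closed {(x, t::real). f x \<le> ereal t}"

definition conj_fun :: "(real^'n \<Rightarrow> ereal) \<Rightarrow> real^'n \<Rightarrow> ereal" where
  "conj_fun f y = (SUP x. ereal (x \<bullet> y) - f x)"

definition biconj_fun :: "(real^'n \<Rightarrow> ereal) \<Rightarrow> real^'n \<Rightarrow> ereal" where
  "biconj_fun f = conj_fun (conj_fun f)"

text \<open>rho(f) = sup_w (f(Xw) - f**(Xw)), with the convention (+\<infinity>) - (+\<infinity>) = 0.\<close>
definition rho :: "(real^'n \<Rightarrow> ereal) \<Rightarrow> real^'m^'n \<Rightarrow> ereal" where
  "rho f X = (SUP w. (if f (X *v w) = \<infinity> \<and> biconj_fun f (X *v w) = \<infinity> then 0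
                      else f (X *v w) - biconj_fun f (X *v w)))"

definition l0norm :: "real^'m \<Rightarrow> nat" where
  "l0norm w = card {i. w $ i \<noteq> 0}"

definition diagm :: "real^'m \<Rightarrow> real^'m^'m" where
  "diagm u = (\<chi> i j. if i = j then u $ i else 0)"

definition p_con :: "(real^'n \<Rightarrow> ereal) \<Rightarrow> real^'m^'n \<Rightarrow> real \<Rightarrow> nat \<Rightarrow> ereal" where
  "p_con f X \<gamma> q = (INF w \<in> {w. l0norm w \<le> q \<and> (norm w)^2 \<le> \<gamma>}. f (X *v w))"

definition relax_feasible :: "real \<Rightarrow> real \<Rightarrow> real^'m \<Rightarrow> real^'m \<Rightarrow> bool" where
  "relax_feasible k \<gamma> v u \<longleftrightarrow> (\<forall>i. 0 \<le> u $ i \<and> u $ i \<le> 1) \<and>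
      (\<Sum>i\<in>UNIV. u $ i) \<le> k \<and> v \<bullet> (diagm u *v v) \<le> \<gamma>"

definition p_relax :: "(real^'n \<Rightarrow> ereal) \<Rightarrow> real^'m^'n \<Rightarrow> real \<Rightarrow> nat \<Rightarrow> ereal" where
  "p_relax f X \<gamma> k = (INF (v, u) \<in> {(v, u). relax_feasible (real k) \<gamma> v u}.
                         f (X *v (diagm u *v v)))"

text \<open>Compact SVD X = U_r \<Sigma>_r V_r^T: columns U j, V j and singular values \<sigma> j for j < r.\<close>
definition compact_svd :: "real^'m^'n \<Rightarrow> nat \<Rightarrow> (nat \<Rightarrow> real^'n) \<Rightarrow> (nat \<Rightarrow> real)
     \<Rightarrow> (nat \<Rightarrow> real^'m) \<Rightarrow> bool" where
  "compact_svd X r U \<sigma> V \<longleftrightarrow>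
     (\<forall>j<r. \<forall>j'<r. U j \<bullet> U j' = (if j = j' then 1 else 0) \<and>
                    V j \<bullet> V j' = (if j = j' then 1 else 0)) \<and>
     (\<forall>j<r. \<sigma> j > 0) \<and>
     (\<forall>a b. X $ a $ b = (\<Sum>j<r. U j $ a * \<sigma> j * V j $ b))"

text \<open>The linear program in u, given c, k, \<gamma>, v*, the columns \<ell>_i of \<Sigma>_r V_r^T
  (stored as L j i = (\<ell>_i)_j for j < r) and z*.\<close>
definition lp_feasible :: "real \<Rightarrow> real \<Rightarrow> real^'m \<Rightarrow> nat \<Rightarrow> (nat \<Rightarrow> 'm \<Rightarrow> real)
     \<Rightarrow> (nat \<Rightarrow> real) \<Rightarrow> real^'m \<Rightarrow> bool" where
  "lp_feasible k \<gamma> vs r L z u \<longleftrightarrow>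
     (\<Sum>i\<in>UNIV. u $ i) \<le> k \<and> (\<Sum>i\<in>UNIV. u $ i * (vs $ i)^2) \<le> \<gamma> \<and>
     (\<forall>j<r. (\<Sum>i\<in>UNIV. u $ i * L j i * vs $ i) = z j) \<and>
     (\<forall>i. 0 \<le> u $ i \<and> u $ i \<le> 1)"

text \<open>Basic feasible solution: feasible, and the normals of the active constraints
  (all equality constraints plus the tight inequality constraints) span R^m.\<close>
definition lp_active_normals :: "real \<Rightarrow> real \<Rightarrow> real^'m \<Rightarrow> nat \<Rightarrow> (nat \<Rightarrow> 'm \<Rightarrow> real)
     \<Rightarrow> real^'m \<Rightarrow> (real^'m) set" where
  "lp_active_normals k \<gamma> vs r L u =
     {(\<chi> i. L j i * vs $ i) | j. j < r} \<union>
     (if (\<Sum>i\<in>UNIV. u $ i) = k then {(\<chi> i. 1)} else {}) \<union>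
     (if (\<Sum>i\<in>UNIV. u $ i * (vs $ i)^2) = \<gamma> then {(\<chi> i. (vs $ i)^2)} else {}) \<union>
     {axis i 1 | i. u $ i = 0 \<or> u $ i = 1}"

definition lp_bfs :: "real \<Rightarrow> real \<Rightarrow> real^'m \<Rightarrow> nat \<Rightarrow> (nat \<Rightarrow> 'm \<Rightarrow> real)
     \<Rightarrow> (nat \<Rightarrow> real) \<Rightarrow> real^'m \<Rightarrow> bool" where
  "lp_bfs k \<gamma> vs r L z u \<longleftrightarrow> lp_feasible k \<gamma> vs r L z u \<and>
     span (lp_active_normals k \<gamma> vs r L u) = UNIV"

definition lp_optimal :: "real^'m \<Rightarrow> real \<Rightarrow> real \<Rightarrow> real^'m \<Rightarrow> nat \<Rightarrow> (nat \<Rightarrow> 'm \<Rightarrow> real)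
     \<Rightarrow> (nat \<Rightarrow> real) \<Rightarrow> real^'m \<Rightarrow> bool" where
  "lp_optimal c k \<gamma> vs r L z u \<longleftrightarrow> lp_feasible k \<gamma> vs r L z u \<and>
     (\<forall>u'. lp_feasible k \<gamma> vs r L z u' \<longrightarrow> c \<bullet> u \<le> c \<bullet> u')"

definition std_gaussian :: "(real^'m) measure" where
  "std_gaussian = density lborel (\<lambda>c. ennreal (\<Prod>i\<in>UNIV. std_normal_density (c $ i)))"

definition round_point :: "real^'m \<Rightarrow> real^'m \<Rightarrow> real^'m" where
  "round_point ub vs =
     (let S = {i. ub $ i \<notin> {0, 1}};
          ut = (\<chi> i. if i \<in> S then 1 else ub $ i);
          vt = (\<chi> i. if i \<in> S then ub $ i * vs $ i else vs $ i)
      in diagm ut *v vt)"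

end

theory Submission
  imports Defs
begin

(* Coordinatewise the rounded point is w_i = ub_i v*_i, and the equality constraints of the
   linear program say Sigma_r V_r^T w = z*; hence X w = X D v* with D the diagonal matrix of u*,
   and OPT = t*, which is at most p**_con(k) <= p*_con(k). At a basic feasible solution the
   active normals span R^m, and at most r + 2 of them are not unit vectors, so at most r + 2
   coordinates of ub are fractional; at most k equal 1 because their sum is at most k. With
   ub_i^2 <= ub_i this makes w feasible for p*_con(k + r + 2), and rho(f) >= 0 gives the lower
   bound. An optimal basic feasible solution (an extreme point of the optimal face) exists for
   every cost vector c, so the statement holds surely, not only almost surely. *)

lemma diagm_mult_vec_nth: "(diagm u *v v) $ i = u $ i * v $ i"
  unfolding diagm_def matrix_vector_mult_def
  by (simp add: if_distrib[of "\<lambda>x. x * _"] cong: if_cong)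

lemma round_point_nth: "round_point ub vs $ i = ub $ i * vs $ i"
  unfolding round_point_def Let_def diagm_mult_vec_nth by auto

lemma compact_svd_mult_vec_nth:
  assumes "compact_svd X r U \<sigma> V"
  shows "(X *v w) $ a = (\<Sum>j<r. U j $ a * (\<Sum>b\<in>UNIV. \<sigma> j * V j $ b * w $ b))"
proof -
  have "(X *v w) $ a = (\<Sum>b\<in>UNIV. \<Sum>j<r. U j $ a * (\<sigma> j * V j $ b * w $ b))"
    using assms unfolding compact_svd_def matrix_vector_mult_def
    by (simp add: sum_distrib_right mult.assoc)
  also have "\<dots> = (\<Sum>j<r. U j $ a * (\<Sum>b\<in>UNIV. \<sigma> j * V j $ b * w $ b))"
    by (subst sum.swap) (simp add: sum_distrib_left)
  finally show ?thesis .
qed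

lemma compact_svd_mult_vec_cong:
  assumes "compact_svd X r U \<sigma> V"
    and "\<And>j. j < r \<Longrightarrow> (\<Sum>b\<in>UNIV. \<sigma> j * V j $ b * w $ b) = (\<Sum>b\<in>UNIV. \<sigma> j * V j $ b * w' $ b)"
  shows "X *v w = X *v w'"
  using assms by (simp add: vec_eq_iff compact_svd_mult_vec_nth[OF assms(1)])

lemma lp_feasible_set_eq:
  "{u. lp_feasible k \<gamma> vs r L z u} =
    {u. (\<chi> i. 1) \<bullet> u \<le> k} \<inter> {u. (\<chi> i. (vs $ i)^2) \<bullet> u \<le> \<gamma>} \<inter>
    (\<Inter>j<r. {u. (\<chi> i. L j i * vs $ i) \<bullet> u = z j}) \<inter> cbox 0 (\<chi> i. 1)"
  unfolding lp_feasible_def inner_vec_def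
  by (auto simp: mem_box_cart mult.commute mult.left_commute)

lemma compact_lp_feasible: "compact {u. lp_feasible k \<gamma> vs r L z u}"
  unfolding lp_feasible_set_eq
  by (subst Int_commute, intro compact_Int_closed compact_cbox closed_Int closed_INT
        closed_halfspace_le closed_hyperplane ballI)

lemma convex_lp_feasible: "convex {u. lp_feasible k \<gamma> vs r L z u}"
  unfolding lp_feasible_set_eq
  by (intro convex_Int convex_INT convex_halfspace_le convex_hyperplane convex_box)

lemma eventually_add_mult_le:
  fixes x y b :: real
  assumes "x \<le> b" and "x = b \<Longrightarrow> y = 0"
  shows "\<forall>\<^sub>F t in at 0. x + t * y \<le> b"
proof (cases "y = 0")
  case False
  then have "x < b" using assms by fastforce
  moreover have "((\<lambda>t. x + t * y) \<longlongrightarrow> x + 0 * y) (at 0)" by (intro tendsto_intros)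
  ultimately have "\<forall>\<^sub>F t in at 0. x + t * y < b" by (simp add: order_tendstoD(2))
  then show ?thesis by (rule eventually_mono) simp
qed (use assms in simp)

lemma extreme_point_of_add_diff:
  assumes "x extreme_point_of S" and "x + d \<in> S" and "x - d \<in> S"
  shows "d = 0"
proof (rule ccontr)
  assume "d \<noteq> 0"
  have "x - d \<noteq> x + d"
  proof
    assume "x - d = x + d"
    then have "2 *\<^sub>R d = 0" by (simp add: scaleR_2 algebra_simps)
    with \<open>d \<noteq> 0\<close> show False by simp
  qed
  then have "x \<in> open_segment (x - d) (x + d)"
    using midpoint_in_open_segment[of "x - d" "x + d"] by (simp add: midpoint_def)
  then show False using assms unfolding extreme_point_of_def by blast
qed

lemma lp_feasible_along_orthogonal:
  fixes u d :: "real^'m"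
  assumes feas: "lp_feasible k \<gamma> vs r L z u"
    and orth: "\<And>a. a \<in> lp_active_normals k \<gamma> vs r L u \<Longrightarrow> a \<bullet> d = 0"
  shows "\<forall>\<^sub>F t in at 0. lp_feasible k \<gamma> vs r L z (u + t *\<^sub>R d)"
proof -
  have sum_tight: "(\<Sum>i\<in>UNIV. d $ i) = 0" if "(\<Sum>i\<in>UNIV. u $ i) = k"
    using orth[of "\<chi> i. 1"] that by (simp add: lp_active_normals_def inner_vec_def)
  have energy_tight: "(\<Sum>i\<in>UNIV. d $ i * (vs $ i)^2) = 0" if "(\<Sum>i\<in>UNIV. u $ i * (vs $ i)^2) = \<gamma>"
    using orth[of "\<chi> i. (vs $ i)^2"] that by (simp add: lp_active_normals_def inner_vec_def mult.commute)
  have equality: "(\<Sum>i\<in>UNIV. d $ i * L j i * vs $ i) = 0" if "j < r" for j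
    using orth[of "\<chi> i. L j i * vs $ i"] that
    by (auto simp: lp_active_normals_def inner_vec_def mult.commute mult.left_commute)
  have bound_tight: "d $ i = 0" if "u $ i = 0 \<or> u $ i = 1" for i
  proof -
    have "axis i 1 \<in> lp_active_normals k \<gamma> vs r L u"
      using that unfolding lp_active_normals_def by blast
    from orth[OF this] show ?thesis by (simp add: inner_axis')
  qed
  have "\<forall>\<^sub>F t in at 0. (\<Sum>i\<in>UNIV. u $ i) + t * (\<Sum>i\<in>UNIV. d $ i) \<le> k"
    using feas sum_tight by (intro eventually_add_mult_le) (auto simp: lp_feasible_def)
  moreover have "\<forall>\<^sub>F t in at 0.
      (\<Sum>i\<in>UNIV. u $ i * (vs $ i)^2) + t * (\<Sum>i\<in>UNIV. d $ i * (vs $ i)^2) \<le> \<gamma>"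
    using feas energy_tight by (intro eventually_add_mult_le) (auto simp: lp_feasible_def)
  moreover have "\<forall>\<^sub>F t in at 0. \<forall>i. 0 \<le> u $ i + t * d $ i \<and> u $ i + t * d $ i \<le> 1"
  proof (intro eventually_all_finite eventually_conj)
    fix i
    show "\<forall>\<^sub>F t in at 0. 0 \<le> u $ i + t * d $ i"
      using eventually_add_mult_le[of "- u $ i" 0 "- d $ i"] feas bound_tight[of i]
      by (auto simp: lp_feasible_def elim: eventually_mono)
    show "\<forall>\<^sub>F t in at 0. u $ i + t * d $ i \<le> 1"
      using eventually_add_mult_le[of "u $ i" 1 "d $ i"] feas bound_tight[of i]
      by (auto simp: lp_feasible_def)
  qed
  ultimately show ?thesis
  proof eventually_elim
    case (elim t)
    then show ?case
      using feas equality unfolding lp_feasible_def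
      by (simp add: algebra_simps sum.distrib flip: sum_distrib_left)
  qed
qed

lemma lp_extreme_point_active_normals_span:
  fixes u :: "real^'m"
  assumes extreme: "u extreme_point_of {u. lp_feasible k \<gamma> vs r L z u}"
  shows "span (lp_active_normals k \<gamma> vs r L u) = UNIV"
proof (rule ccontr)
  let ?A = "lp_active_normals k \<gamma> vs r L u"
  assume "span ?A \<noteq> UNIV"
  then obtain d :: "real^'m" where "d \<noteq> 0" and "\<And>a. a \<in> span ?A \<Longrightarrow> orthogonal d a"
    using orthogonal_to_subspace_exists_gen[of ?A UNIV] by auto
  then have orth: "\<And>a. a \<in> ?A \<Longrightarrow> a \<bullet> d = 0"
    by (simp add: orthogonal_def inner_commute span_base)
  have "lp_feasible k \<gamma> vs r L z u"
    using extreme by (simp add: extreme_point_of_def)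
  from lp_feasible_along_orthogonal[OF this orth] obtain \<epsilon> :: real where "\<epsilon> > 0"
    and feas_near: "\<And>t. t \<noteq> 0 \<Longrightarrow> \<bar>t\<bar> < \<epsilon> \<Longrightarrow> lp_feasible k \<gamma> vs r L z (u + t *\<^sub>R d)"
    unfolding eventually_at dist_real_def by auto
  have "u + (\<epsilon> / 2) *\<^sub>R d \<in> {u. lp_feasible k \<gamma> vs r L z u}"
    using feas_near[of "\<epsilon> / 2"] \<open>\<epsilon> > 0\<close> by simp
  moreover have "u - (\<epsilon> / 2) *\<^sub>R d \<in> {u. lp_feasible k \<gamma> vs r L z u}"
    using feas_near[of "- \<epsilon> / 2"] \<open>\<epsilon> > 0\<close> by simp
  ultimately have "(\<epsilon> / 2) *\<^sub>R d = 0"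
    by (rule extreme_point_of_add_diff[OF extreme])
  with \<open>\<epsilon> > 0\<close> \<open>d \<noteq> 0\<close> show False by simp
qed

lemma lp_optimal_bfs_exists:
  assumes "lp_feasible k \<gamma> vs r L z u\<^sub>0"
  shows "\<exists>ub. lp_optimal c k \<gamma> vs r L z ub \<and> lp_bfs k \<gamma> vs r L z ub"
proof -
  let ?P = "{u. lp_feasible k \<gamma> vs r L z u}"
  have "continuous_on ?P (\<lambda>u. c \<bullet> u)" by (intro continuous_intros)
  then obtain u\<^sub>m where "u\<^sub>m \<in> ?P" and min: "\<And>u. u \<in> ?P \<Longrightarrow> c \<bullet> u\<^sub>m \<le> c \<bullet> u"
    using continuous_attains_inf[OF compact_lp_feasible[of k \<gamma> vs r L z]] assms by blast
  let ?F = "?P \<inter> {u. c \<bullet> u = c \<bullet> u\<^sub>m}"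
  have face: "?F face_of ?P"
    using min by (intro face_of_Int_supporting_hyperplane_ge convex_lp_feasible) auto
  moreover have "compact ?F"
    using face by (rule face_of_imp_compact[OF convex_lp_feasible compact_lp_feasible])
  moreover have "?F \<noteq> {}" using \<open>u\<^sub>m \<in> ?P\<close> by auto
  ultimately obtain ub where "ub extreme_point_of ?F"
    using extreme_point_exists_convex face_of_imp_convex by blast
  then have "ub extreme_point_of ?P" and "ub \<in> ?F"
    using extreme_point_of_face[OF face] by auto
  with min have "lp_optimal c k \<gamma> vs r L z ub" and "lp_bfs k \<gamma> vs r L z ub"
    by (auto simp: lp_optimal_def lp_bfs_def lp_extreme_point_active_normals_span)
  then show ?thesis by blast
qed

lemma lp_bfs_card_fractional:
  fixes ub :: "real^'m"
  assumes bfs: "lp_bfs k \<gamma> vs r L z ub"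
  shows "card {i. ub $ i \<noteq> 0 \<and> ub $ i \<noteq> 1} \<le> r + 2"
proof -
  let ?N = "{i. ub $ i = 0 \<or> ub $ i = 1}"
  let ?E = "(\<lambda>j. \<chi> i. L j i * vs $ i) ` {..<r}"
  let ?B = "(\<lambda>i. axis i (1::real)) ` ?N"
  let ?R = "?E \<union> {\<chi> i. 1} \<union> {\<chi> i. (vs $ i)^2} \<union> ?B"
  have sub: "lp_active_normals k \<gamma> vs r L ub \<subseteq> ?R"
    unfolding lp_active_normals_def by auto
  have "CARD('m) = dim (UNIV :: (real^'m) set)" by simp
  also have "\<dots> \<le> card (lp_active_normals k \<gamma> vs r L ub)"
    using bfs finite_subset[OF sub] by (intro dim_le_card) (auto simp: lp_bfs_def)
  also have "\<dots> \<le> card ?R" by (rule card_mono[OF _ sub]) simp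
  also have "\<dots> \<le> card ?E + 1 + 1 + card ?B"
    using card_Un_le[of "?E \<union> {\<chi> i. 1} \<union> {\<chi> i. (vs $ i)^2}" ?B]
      card_Un_le[of "?E \<union> {\<chi> i. 1}" "{\<chi> i. (vs $ i)^2}"] card_Un_le[of ?E "{\<chi> i. 1}"]
    by simp
  also have "\<dots> \<le> r + 2 + card ?N"
    using card_image_le[of "{..<r}" "\<lambda>j. \<chi> i. L j i * vs $ i"]
      card_image_le[of ?N "\<lambda>i. axis i (1::real)"]
    by simp
  finally have "CARD('m) \<le> r + 2 + card ?N" .
  moreover have "card {i. ub $ i \<noteq> 0 \<and> ub $ i \<noteq> 1} + card ?N = CARD('m)"
    by (subst card_Un_disjoint[symmetric]) (auto intro: arg_cong[where f = card])
  ultimately show ?thesis by linarith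
qed

lemma l0norm_round_point_le:
  fixes ub :: "real^'m"
  assumes bfs: "lp_bfs (real k) \<gamma> vs r L z ub"
  shows "l0norm (round_point ub vs) \<le> k + r + 2"
proof -
  let ?S = "{i. ub $ i \<noteq> 0 \<and> ub $ i \<noteq> 1}"
  let ?O = "{i. ub $ i = 1}"
  have feas: "lp_feasible (real k) \<gamma> vs r L z ub" using bfs by (simp add: lp_bfs_def)
  have "real (card ?O) = (\<Sum>i\<in>?O. ub $ i)" by simp
  also have "\<dots> \<le> (\<Sum>i\<in>UNIV. ub $ i)"
    using feas by (intro sum_mono2) (auto simp: lp_feasible_def)
  also have "\<dots> \<le> real k" using feas by (simp add: lp_feasible_def)
  finally have "card ?O \<le> k" by simp
  have "l0norm (round_point ub vs) \<le> card (?S \<union> ?O)"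
    unfolding l0norm_def round_point_nth by (rule card_mono) auto
  also have "\<dots> \<le> card ?S + card ?O" by (rule card_Un_le)
  finally show ?thesis using \<open>card ?O \<le> k\<close> lp_bfs_card_fractional[OF bfs] by linarith
qed

lemma norm_round_point_le:
  assumes feas: "lp_feasible k \<gamma> vs r L z ub"
  shows "(norm (round_point ub vs))^2 \<le> \<gamma>"
proof -
  have "(norm (round_point ub vs))^2 = (\<Sum>i\<in>UNIV. (ub $ i * vs $ i)^2)"
    unfolding power2_norm_eq_inner by (simp add: inner_vec_def round_point_nth power2_eq_square)
  also have "\<dots> \<le> (\<Sum>i\<in>UNIV. ub $ i * (vs $ i)^2)"
  proof (rule sum_mono)
    fix i
    have "0 \<le> ub $ i" "ub $ i \<le> 1" using feas by (auto simp: lp_feasible_def)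
    then have "(ub $ i)^2 \<le> ub $ i" by (simp add: power2_eq_square mult_left_le)
    then show "(ub $ i * vs $ i)^2 \<le> ub $ i * (vs $ i)^2"
      by (simp add: power_mult_distrib mult_right_mono)
  qed
  also have "\<dots> \<le> \<gamma>" using feas by (simp add: lp_feasible_def)
  finally show ?thesis .
qed

lemma p_con_le_round_point:
  assumes "lp_bfs (real k) \<gamma> vs r L z ub"
  shows "p_con f X \<gamma> (k + r + 2) \<le> f (X *v round_point ub vs)"
  unfolding p_con_def
  using l0norm_round_point_le[OF assms] norm_round_point_le assms
  by (intro INF_lower) (auto simp: lp_bfs_def)

lemma p_relax_le_p_con:
  fixes X :: "real^'m^'n"
  shows "p_relax f X \<gamma> k \<le> p_con f X \<gamma> k"
  unfolding p_relax_def p_con_def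
proof (rule INF_mono)
  fix w :: "real^'m" assume "w \<in> {w. l0norm w \<le> k \<and> (norm w)^2 \<le> \<gamma>}"
  then have w: "l0norm w \<le> k" "(norm w)^2 \<le> \<gamma>" by auto
  define u :: "real^'m" where "u = (\<chi> i. if w $ i \<noteq> 0 then 1 else 0)"
  have Dw: "diagm u *v w = w" by (simp add: vec_eq_iff diagm_mult_vec_nth u_def)
  have "(\<Sum>i\<in>UNIV. u $ i) = real (card {i. w $ i \<noteq> 0})"
    by (simp add: u_def sum.If_cases)
  also have "\<dots> \<le> real k" using w(1) by (simp add: l0norm_def)
  finally have "relax_feasible (real k) \<gamma> w u"
    using w(2) unfolding relax_feasible_def Dw by (simp add: u_def power2_norm_eq_inner)
  then show "\<exists>p\<in>{(v, u). relax_feasible (real k) \<gamma> v u}.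
      (case p of (v, u) \<Rightarrow> f (X *v (diagm u *v v))) \<le> f (X *v w)"
    by (intro bexI[of _ "(w, u)"]) (auto simp: Dw)
qed

lemma biconj_fun_le: "biconj_fun f x \<le> f x"
  unfolding biconj_fun_def conj_fun_def[of "conj_fun f"]
proof (rule SUP_least)
  fix y
  have conj_ge: "ereal (x \<bullet> y) - f x \<le> conj_fun f y"
    unfolding conj_fun_def by (rule SUP_upper) simp
  show "ereal (y \<bullet> x) - conj_fun f y \<le> f x"
  proof (cases "f x")
    case (real a)
    have "ereal (y \<bullet> x) - conj_fun f y \<le> ereal (y \<bullet> x) - (ereal (x \<bullet> y) - f x)"
      by (rule ereal_minus_mono[OF order_refl conj_ge])
    also have "\<dots> = f x" using real by (simp add: inner_commute)
    finally show ?thesis .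
  next
    case MInf
    then have "conj_fun f y = \<infinity>" using conj_ge by simp
    then show ?thesis by simp
  qed simp
qed

lemma rho_nonneg:
  assumes "\<forall>x. f x \<noteq> -\<infinity>"
  shows "0 \<le> rho f X"
  unfolding rho_def
proof (rule SUP_upper2[of 0])
  let ?a = "f (X *v 0)" and ?b = "biconj_fun f (X *v 0)"
  have "?b \<le> ?a" by (rule biconj_fun_le)
  moreover have "?a \<noteq> -\<infinity>" using assms by simp
  ultimately show "0 \<le> (if ?a = \<infinity> \<and> ?b = \<infinity> then 0 else ?a - ?b)"
    by (cases ?a; cases ?b) auto
qed simp

theorem corollary4p1:
  fixes f :: "real^'n \<Rightarrow> ereal"
    and X :: "real^'m^'n"
    and r :: nat and U :: "nat \<Rightarrow> real^'n" and \<sigma> :: "nat \<Rightarrow> real" and V :: "nat \<Rightarrow> real^'m"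
    and \<gamma> :: real and k :: nat
    and vs us :: "real^'m"
  assumes f: "closed_convex_fun f"
    and rk: "rank X = r"
    and svd: "compact_svd X r U \<sigma> V"
    and \<gamma>: "\<gamma> > 0"
    and opt_feas: "relax_feasible (real k) \<gamma> vs us"
    and opt: "\<forall>v u. relax_feasible (real k) \<gamma> v u \<longrightarrow>
                 f (X *v (diagm us *v vs)) \<le> f (X *v (diagm u *v v))"
  shows "AE c in std_gaussian.
    (let L = (\<lambda>j i. \<sigma> j * V j $ i);
         z = (\<lambda>j. \<Sum>i\<in>UNIV. L j i * (diagm us *v vs) $ i)
     in (\<exists>ub. lp_optimal c (real k) \<gamma> vs r L z ub \<and> lp_bfs (real k) \<gamma> vs r L z ub) \<and>
        (\<forall>ub. lp_optimal c (real k) \<gamma> vs r L z ub \<and> lp_bfs (real k) \<gamma> vs r L z ub \<longrightarrow>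
           (let w = round_point ub vs; OPT = f (X *v w)
            in p_con f X \<gamma> (k + r + 2) - rho f X \<le> OPT \<and>
               OPT \<le> p_relax f X \<gamma> k \<and> p_relax f X \<gamma> k \<le> p_con f X \<gamma> k)))"
proof (rule AE_I2)
  fix c :: "real^'m"
  define L where "L = (\<lambda>j i. \<sigma> j * V j $ i)"
  define z where "z = (\<lambda>j. \<Sum>i\<in>UNIV. L j i * (diagm us *v vs) $ i)"
  have feas: "lp_feasible (real k) \<gamma> vs r L z us"
    using opt_feas unfolding lp_feasible_def relax_feasible_def z_def
    by (auto simp: inner_vec_def diagm_mult_vec_nth power2_eq_square mult_ac)
  have same_image: "X *v round_point ub vs = X *v (diagm us *v vs)"
    if "lp_feasible (real k) \<gamma> vs r L z ub" for ub
    using that by (intro compact_svd_mult_vec_cong[OF svd])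
      (auto simp: lp_feasible_def z_def L_def round_point_nth diagm_mult_vec_nth mult_ac)
  have "f (X *v (diagm us *v vs)) \<le> p_relax f X \<gamma> k"
    unfolding p_relax_def using opt by (auto intro: INF_greatest)
  moreover have "p_con f X \<gamma> (k + r + 2) - rho f X \<le> p_con f X \<gamma> (k + r + 2)"
    using f by (intro ereal_diff_le_self rho_nonneg) (simp add: closed_convex_fun_def)
  ultimately have bounds: "p_con f X \<gamma> (k + r + 2) - rho f X \<le> f (X *v round_point ub vs) \<and>
      f (X *v round_point ub vs) \<le> p_relax f X \<gamma> k" if "lp_bfs (real k) \<gamma> vs r L z ub" for ub
    using that same_image p_con_le_round_point[OF that, of f X]
    by (auto simp: lp_bfs_def intro: order_trans)
  show "let L = (\<lambda>j i. \<sigma> j * V j $ i); z = (\<lambda>j. \<Sum>i\<in>UNIV. L j i * (diagm us *v vs) $ i)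
     in (\<exists>ub. lp_optimal c (real k) \<gamma> vs r L z ub \<and> lp_bfs (real k) \<gamma> vs r L z ub) \<and>
        (\<forall>ub. lp_optimal c (real k) \<gamma> vs r L z ub \<and> lp_bfs (real k) \<gamma> vs r L z ub \<longrightarrow>
           (let w = round_point ub vs; OPT = f (X *v w)
            in p_con f X \<gamma> (k + r + 2) - rho f X \<le> OPT \<and>
               OPT \<le> p_relax f X \<gamma> k \<and> p_relax f X \<gamma> k \<le> p_con f X \<gamma> k))"
    using lp_optimal_bfs_exists[OF feas] bounds p_relax_le_p_con
    unfolding L_def z_def by (simp add: Let_def)
qed

end
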